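(* For every $n\ge 4$, the vertex of $\mathrm{PYR}(n)$ corresponding to the pyramidal tour with code $\langle 1,1,\dots,1\rangle$ and the vertex corresponding to the pyramidal tour with code $\langle 0,0,\dots,0\rangle$ are each adjacent to every other vertex of $\mathrm{PYR}(n)$.
   Context: Let $K_n$ be the complete undirected graph on vertex set $\{1,\dots,n\}$ with edge set $E$. A Hamiltonian cycle $\langle 1,i_1,\dots,i_r,n,j_1,\dots,j_{n-r-2}\rangle$ is called a pyramidal tour if $i_1<i_2<\dots<i_r$ and $j_1>j_2>\dots>j_{n-r-2}$; tours are undirected. Let $PT_n$ be the set of all pyramidal tours. For $x\in PT_n$ its characteristic vector $x^v\in\mathbb{R}^E$ has $x^v_e=1$ if edge $e$ lies in $x$ and $0$ otherwise. The pyramidal tours polytope is $\mathrm{PYR}(n)=\operatorname{conv}\{x^v : x\in PT_n\}$. Every pyramidal tour contains the edge $\{1,2\}$; the tour is oriented so that vertex $2$ belongs to the increasing part. The code of $x$ is the $0/1$ vector $x^c=(x^c_3,\dots,x^c_{n-1})$ with $x^c_i=1$ if vertex $i$ is visited in the increasing part of $x$ and $x^c_i=0$ otherwise; $x\mapsto x^c$ is a bijection from $PT_n$ onto $\{0,1\}^{n-3}$. Two vertices are adjacent if the segment joining them is a one-dimensional face of the polytope. *)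

theory Defs
  imports "HOL-Analysis.Analysis" "HOL-Library.Function_Algebras"
begin

text \<open>Real vector space structure on functions (pointwise), so that
  \<open>\<real>^E\<close> can be modelled as functions from edges (2-element vertex sets)
  to reals, uniformly in n.\<close>

instantiation "fun" :: (type, real_vector) real_vector
begin
definition scaleR_fun :: "real \<Rightarrow> ('a \<Rightarrow> 'b) \<Rightarrow> 'a \<Rightarrow> 'b"
  where "scaleR_fun c f = (\<lambda>x. c *\<^sub>R f x)"
instance
  by standard (simp_all add: scaleR_fun_def fun_eq_iff scaleR_add_right scaleR_add_left)
end

definition Kn_edges :: "nat \<Rightarrow> nat set set" where
  "Kn_edges n = {{i, j} | i j. i \<in> {1..n} \<and> j \<in> {1..n} \<and> i \<noteq> j}"

definition tour_edges :: "nat list \<Rightarrow> nat set set" where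
  "tour_edges xs = {{xs ! k, xs ! ((k + 1) mod length xs)} | k. k < length xs}"

text \<open>The sequence 1, inc, n, dec describes a pyramidal tour of K_n:
  inc strictly increasing, dec strictly decreasing, together visiting each of
  2..n-1 exactly once.\<close>
definition pyr_seq :: "nat \<Rightarrow> nat list \<Rightarrow> nat list \<Rightarrow> bool" where
  "pyr_seq n inc dec \<longleftrightarrow> sorted_wrt (<) inc \<and> sorted_wrt (>) dec \<and>
     distinct (inc @ dec) \<and> set (inc @ dec) = {2..n-1}"

definition PT :: "nat \<Rightarrow> nat set set set" where
  "PT n = {tour_edges (1 # inc @ n # dec) | inc dec. pyr_seq n inc dec}"

definition charvec :: "nat set set \<Rightarrow> (nat set \<Rightarrow> real)" where
  "charvec T = (\<lambda>e. if e \<in> T then 1 else 0)"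

definition PYR :: "nat \<Rightarrow> (nat set \<Rightarrow> real) set" where
  "PYR n = convex hull (charvec ` PT n)"

text \<open>Code of a tour: entry i (3 \<le> i \<le> n-1) is 1 iff i is visited in the
  increasing part, the tour being oriented so that 2 is in the increasing part.\<close>
definition pyr_code :: "nat \<Rightarrow> nat set set \<Rightarrow> nat \<Rightarrow> nat" where
  "pyr_code n T i = (if \<exists>inc dec. pyr_seq n inc dec \<and> 2 \<in> set inc \<and>
        tour_edges (1 # inc @ n # dec) = T \<and> i \<in> set inc then 1 else 0)"

definition adjacent_in :: "('a::real_vector) set \<Rightarrow> 'a \<Rightarrow> 'a \<Rightarrow> bool" where
  "adjacent_in P x y \<longleftrightarrow> x \<noteq> y \<and> closed_segment x y face_of P"

end

theory Submission
  imports Defs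
begin

text \<open>A pyramidal tour is determined by the set \<open>A \<ni> 2\<close> of inner vertices on its increasing
  path; its edges are the pairs of neighbours in \<open>{1, n} \<union> A\<close> and in \<open>{1, n} \<union> ({2..n-1} - A)\<close>.
  Let T be the tour with \<open>A = {2..n-1}\<close> or \<open>A = {2}\<close> and Y any other tour. Whether two vertices
  \<open>k, k+1\<close> lie on the same path of a tour Z is witnessed by a long edge of Z jumping over them,
  and apart from \<open>{1, 3}\<close> the long edges of T are shared by no tour but T itself. Hence a tour Z
  using only edges of T and Y agrees with Y at every \<open>k\<close>, i.e. \<open>Z \<in> {T, Y}\<close>. The number of edges
  outside \<open>T \<union> Y\<close> is then a linear functional vanishing at the vertices of T and Y and at
  least 1 at every other vertex of the polytope, so the segment between them is a face.\<close>

definition consecutive :: "'a::linorder set \<Rightarrow> 'a \<Rightarrow> 'a \<Rightarrow> bool" where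
  "consecutive S a b \<longleftrightarrow> a \<in> S \<and> b \<in> S \<and> a < b \<and> (\<forall>c\<in>S. \<not> (a < c \<and> c < b))"

definition consecutive_pairs :: "'a::linorder set \<Rightarrow> 'a set set" where
  "consecutive_pairs S = {{a, b} | a b. consecutive S a b}"

fun path_edges :: "'a list \<Rightarrow> 'a set set" where
  "path_edges (x # y # r) = insert {x, y} (path_edges (y # r))"
| "path_edges _ = {}"

lemma consecutive_pairsI: "consecutive S a b \<Longrightarrow> {a, b} \<in> consecutive_pairs S"
  unfolding consecutive_pairs_def by blast

lemma mem_consecutive_pairsD: "{a, b} \<in> consecutive_pairs S \<Longrightarrow> a < b \<Longrightarrow> consecutive S a b"
  unfolding consecutive_pairs_def consecutive_def by (auto simp: doubleton_eq_iff)

lemma consecutive_not_between: "consecutive S a b \<Longrightarrow> a < c \<Longrightarrow> c < b \<Longrightarrow> c \<notin> S"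
  unfolding consecutive_def by blast

lemma consecutive_insert_least:
  assumes "\<forall>s\<in>S. x < s" "y \<in> S" "\<forall>s\<in>S. y \<le> s"
  shows "consecutive (insert x S) a b \<longleftrightarrow> (a = x \<and> b = y) \<or> consecutive S a b"
  using assms unfolding consecutive_def by (safe; auto) (meson antisym not_less)

lemma consecutive_straddling:
  assumes "finite S" "a \<in> S" "c \<in> S" "a < m" "m < c" "m \<notin> S"
  shows "\<exists>i j. consecutive S i j \<and> i < m \<and> m < j"
proof -
  let ?L = "{x\<in>S. x < m}" and ?U = "{x\<in>S. m < x}"
  have L: "finite ?L" "?L \<noteq> {}" and U: "finite ?U" "?U \<noteq> {}"
    using assms by auto
  define i where "i = Max ?L"
  define j where "j = Min ?U"
  have i: "i \<in> S" "i < m" and j: "j \<in> S" "m < j"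
    using Max_in[OF L] Min_in[OF U] unfolding i_def j_def by auto
  have "consecutive S i j"
    unfolding consecutive_def
  proof (intro conjI ballI)
    fix x assume x: "x \<in> S"
    show "\<not> (i < x \<and> x < j)"
    proof (cases x m rule: linorder_cases)
      case less
      then have "x \<le> i" unfolding i_def using x L(1) by (intro Max_ge) auto
      then show ?thesis by (auto dest: leD)
    next
      case greater
      then have "j \<le> x" unfolding j_def using x U(1) by (intro Min_le) auto
      then show ?thesis by (auto dest: leD)
    qed (use x assms(6) in simp)
  qed (use i j in auto)
  with i j show ?thesis by blast
qed

lemma path_edges_append: "path_edges (u @ y # v) = path_edges (u @ [y]) \<union> path_edges (y # v)"
proof (induction u)
  case (Cons x u)
  then show ?case by (cases u) auto
qed simp

lemma path_edges_rev: "path_edges (rev xs) = path_edges xs"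
proof (induction xs rule: path_edges.induct)
  case (1 x y r)
  have "path_edges (rev (x # y # r)) = path_edges (rev (y # r)) \<union> {{x, y}}"
    by (simp add: path_edges_append[of "rev r" y "[x]"] insert_commute)
  with 1 show ?case by auto
qed auto

lemma path_edges_conv_nth:
  "path_edges xs = (\<lambda>k. {xs ! k, xs ! Suc k}) ` {..<length xs - 1}"
proof (induction xs rule: path_edges.induct)
  case (1 x y r)
  have "{..<length (x # y # r) - 1} = insert 0 (Suc ` {..<length (y # r) - 1})"
    by (simp add: lessThan_Suc_eq_insert_0)
  with 1 show ?case
    by (simp add: image_image)
qed auto

lemma tour_edges_conv_path_edges:
  assumes "xs \<noteq> []"
  shows "tour_edges xs = path_edges (xs @ [hd xs])"
proof -
  have wrap: "(xs @ [hd xs]) ! Suc k = xs ! ((k + 1) mod length xs)" if "k < length xs" for k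
  proof (cases "Suc k = length xs")
    case True
    with assms show ?thesis by (simp add: nth_append hd_conv_nth)
  next
    case False
    with that show ?thesis by (simp add: nth_append)
  qed
  have "tour_edges xs = (\<lambda>k. {xs ! k, xs ! ((k + 1) mod length xs)}) ` {..<length xs}"
    unfolding tour_edges_def by blast
  also have "\<dots> = (\<lambda>k. {(xs @ [hd xs]) ! k, (xs @ [hd xs]) ! Suc k}) ` {..<length xs}"
    by (intro image_cong) (simp_all add: wrap nth_append_left)
  finally show ?thesis
    by (simp add: path_edges_conv_nth)
qed

lemma path_edges_sorted: "sorted_wrt (<) xs \<Longrightarrow> path_edges xs = consecutive_pairs (set xs)"
proof (induction xs rule: path_edges.induct)
  case (1 x y r)
  have "\<forall>s\<in>set (y # r). x < s" "\<forall>s\<in>set (y # r). y \<le> s"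
    using 1(2) by auto
  then have "consecutive_pairs (set (x # y # r)) = insert {x, y} (consecutive_pairs (set (y # r)))"
    unfolding consecutive_pairs_def using consecutive_insert_least[of "set (y # r)" x y] by auto
  with 1 show ?case by simp
qed (auto simp: consecutive_pairs_def consecutive_def)

section \<open>Pyramidal tours as pairs of monotone paths\<close>

text \<open>The pyramidal tour whose increasing part visits exactly \<open>A \<subseteq> {2..n-1}\<close> consists of
  two monotone paths from 1 to n, through \<open>pyr_side n A True\<close> and \<open>pyr_side n A False\<close>.\<close>

definition pyr_side :: "nat \<Rightarrow> nat set \<Rightarrow> bool \<Rightarrow> nat set" where
  "pyr_side n A up = insert 1 (insert n (if up then A else {2..n-1} - A))"

definition pyr_edges :: "nat \<Rightarrow> nat set \<Rightarrow> nat set set" where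
  "pyr_edges n A = consecutive_pairs (pyr_side n A True) \<union> consecutive_pairs (pyr_side n A False)"

lemma pyr_seqD:
  assumes "pyr_seq n inc dec"
  shows "set inc \<subseteq> {2..n-1}" "set dec = {2..n-1} - set inc"
  using assms unfolding pyr_seq_def by auto

lemma tour_edges_pyr_seq:
  assumes ps: "pyr_seq n inc dec" and n: "n \<ge> 2"
  shows "tour_edges (1 # inc @ n # dec) = pyr_edges n (set inc)"
proof -
  have "\<forall>x\<in>set inc \<union> set dec. 1 < x \<and> x < n"
    using n pyr_seqD[OF ps] by (auto simp: subset_iff)
  moreover have "sorted_wrt (<) inc" "sorted_wrt (>) dec"
    using ps unfolding pyr_seq_def by auto
  ultimately have inc: "sorted_wrt (<) (1 # inc @ [n])" and dec: "sorted_wrt (<) (1 # rev dec @ [n])"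
    using n by (auto simp: sorted_wrt_append sorted_wrt_rev)
  have "tour_edges (1 # inc @ n # dec) = path_edges ((1 # inc) @ n # dec @ [1])"
    by (simp add: tour_edges_conv_path_edges)
  also have "\<dots> = path_edges (1 # inc @ [n]) \<union> path_edges (rev (1 # rev dec @ [n]))"
    by (subst path_edges_append) simp
  also have "\<dots> = consecutive_pairs (set (1 # inc @ [n])) \<union> consecutive_pairs (set (1 # rev dec @ [n]))"
    by (simp only: path_edges_rev path_edges_sorted[OF inc] path_edges_sorted[OF dec])
  finally show ?thesis
    unfolding pyr_edges_def pyr_side_def using pyr_seqD[OF ps] by simp
qed

lemma mem_pyr_side_iff: "c \<in> {2..n-1} \<Longrightarrow> c \<in> pyr_side n A up \<longleftrightarrow> (c \<in> A \<longleftrightarrow> up)"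
  unfolding pyr_side_def by auto

lemma one_mem_pyr_side: "1 \<in> pyr_side n A up"
  and n_mem_pyr_side: "n \<in> pyr_side n A up"
  unfolding pyr_side_def by auto

lemma pyr_side_subset: "A \<subseteq> {2..n-1} \<Longrightarrow> n \<ge> 1 \<Longrightarrow> pyr_side n A up \<subseteq> {1..n}"
  unfolding pyr_side_def by (auto simp: subset_iff)

lemma finite_pyr_side: "A \<subseteq> {2..n-1} \<Longrightarrow> finite (pyr_side n A up)"
  unfolding pyr_side_def by (auto intro: finite_subset)

lemma pyr_edgesI: "consecutive (pyr_side n A up) a b \<Longrightarrow> {a, b} \<in> pyr_edges n A"
  unfolding pyr_edges_def using consecutive_pairsI by (cases up) auto

lemma mem_pyr_edgesD: "{a, b} \<in> pyr_edges n A \<Longrightarrow> a < b \<Longrightarrow> \<exists>up. consecutive (pyr_side n A up) a b"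
  unfolding pyr_edges_def using mem_consecutive_pairsD by blast

lemma pyr_edges_complement: "A \<subseteq> {2..n-1} \<Longrightarrow> pyr_edges n ({2..n-1} - A) = pyr_edges n A"
  unfolding pyr_edges_def pyr_side_def by (auto simp: double_diff)

lemma pyr_edges_subset_Kn_edges:
  assumes "A \<subseteq> {2..n-1}" "n \<ge> 1"
  shows "pyr_edges n A \<subseteq> Kn_edges n"
proof
  fix e assume "e \<in> pyr_edges n A"
  then obtain up a b where "consecutive (pyr_side n A up) a b" "e = {a, b}"
    unfolding pyr_edges_def consecutive_pairs_def by blast
  with pyr_side_subset[OF assms] show "e \<in> Kn_edges n"
    unfolding consecutive_def Kn_edges_def by blast
qed

section \<open>Recovering a tour from its edges\<close>

lemma unit_edge_mem_pyr_edges_iff: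
  assumes "2 \<le> k" "Suc k \<le> n - 1"
  shows "{k, Suc k} \<in> pyr_edges n A \<longleftrightarrow> (k \<in> A \<longleftrightarrow> Suc k \<in> A)"
proof
  assume "{k, Suc k} \<in> pyr_edges n A"
  then obtain up where "consecutive (pyr_side n A up) k (Suc k)"
    using mem_pyr_edgesD by blast
  then have "k \<in> pyr_side n A up" "Suc k \<in> pyr_side n A up"
    unfolding consecutive_def by auto
  with assms show "k \<in> A \<longleftrightarrow> Suc k \<in> A"
    by (simp add: mem_pyr_side_iff)
next
  assume "k \<in> A \<longleftrightarrow> Suc k \<in> A"
  with assms have "consecutive (pyr_side n A (k \<in> A)) k (Suc k)"
    unfolding consecutive_def by (simp add: mem_pyr_side_iff)
  then show "{k, Suc k} \<in> pyr_edges n A"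
    by (rule pyr_edgesI)
qed

lemma eq_of_same_switches:
  assumes "A \<subseteq> {2..n-1}" "B \<subseteq> {2..n-1}" "2 \<in> A" "2 \<in> B"
    and switch: "\<And>k. 2 \<le> k \<Longrightarrow> Suc k \<le> n - 1 \<Longrightarrow>
      (k \<in> A \<longleftrightarrow> Suc k \<in> A) \<longleftrightarrow> (k \<in> B \<longleftrightarrow> Suc k \<in> B)"
  shows "A = B"
proof -
  have "k \<in> A \<longleftrightarrow> k \<in> B" if "2 \<le> k" "k \<le> n - 1" for k
    using that
  proof (induction k rule: nat_induct_at_least)
    case base
    then show ?case using assms(3,4) by simp
  next
    case (Suc k)
    then show ?case using switch[of k] by auto
  qed
  with assms(1,2) show ?thesis by auto
qed

lemma pyr_edges_inj:
  assumes "A \<subseteq> {2..n-1}" "B \<subseteq> {2..n-1}" "2 \<in> A" "2 \<in> B" "pyr_edges n A = pyr_edges n B"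
  shows "A = B"
  using assms by (intro eq_of_same_switches[OF assms(1-4)]) (simp add: unit_edge_mem_pyr_edges_iff[symmetric])

lemma same_side_iff_edge_over:
  assumes A: "A \<subseteq> {2..n-1}" and k: "2 \<le> k" "Suc k \<le> n - 1"
  shows "(k \<in> A \<longleftrightarrow> Suc k \<in> A) \<longleftrightarrow> (\<exists>i j. i < k \<and> Suc k < j \<and> {i, j} \<in> pyr_edges n A)"
proof
  assume same: "k \<in> A \<longleftrightarrow> Suc k \<in> A"
  let ?S = "pyr_side n A (k \<notin> A)"
  have out: "k \<notin> ?S" "Suc k \<notin> ?S"
    using same k by (simp_all add: mem_pyr_side_iff)
  obtain i j where c: "consecutive ?S i j" "i < k" "k < j"
    using consecutive_straddling[OF finite_pyr_side[OF A] one_mem_pyr_side n_mem_pyr_side _ _ out(1)] k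
    by force
  moreover have "Suc k < j"
    using c out(2) unfolding consecutive_def by (cases "j = Suc k") auto
  ultimately show "\<exists>i j. i < k \<and> Suc k < j \<and> {i, j} \<in> pyr_edges n A"
    using pyr_edgesI by blast
next
  assume "\<exists>i j. i < k \<and> Suc k < j \<and> {i, j} \<in> pyr_edges n A"
  then obtain i j where e: "i < k" "Suc k < j" "{i, j} \<in> pyr_edges n A" by blast
  then obtain up where "consecutive (pyr_side n A up) i j"
    using mem_pyr_edgesD[of i j n A] by auto
  with e have "k \<notin> pyr_side n A up" "Suc k \<notin> pyr_side n A up"
    using consecutive_not_between[of _ i j k] consecutive_not_between[of _ i j "Suc k"] by auto
  with k show "k \<in> A \<longleftrightarrow> Suc k \<in> A"
    by (simp add: mem_pyr_side_iff)
qed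

lemma switch_iff_edge_from:
  assumes A: "A \<subseteq> {2..n-1}" and k: "2 \<le> k" "Suc k \<le> n - 1"
  shows "(k \<in> A \<longleftrightarrow> Suc k \<notin> A) \<longleftrightarrow> (\<exists>j. Suc k < j \<and> {k, j} \<in> pyr_edges n A)"
proof
  assume switch: "k \<in> A \<longleftrightarrow> Suc k \<notin> A"
  let ?S = "pyr_side n A (k \<in> A)"
  have sides: "k \<in> ?S" "Suc k \<notin> ?S"
    using switch k by (simp_all add: mem_pyr_side_iff)
  obtain i j where c: "consecutive ?S i j" "i < Suc k" "Suc k < j"
    using consecutive_straddling[OF finite_pyr_side[OF A] sides(1) n_mem_pyr_side _ _ sides(2)] k
    by force
  moreover have "i = k"
    using c sides(1) consecutive_not_between[OF c(1), of k] by (cases "i < k") auto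
  ultimately show "\<exists>j. Suc k < j \<and> {k, j} \<in> pyr_edges n A"
    using pyr_edgesI by blast
next
  assume "\<exists>j. Suc k < j \<and> {k, j} \<in> pyr_edges n A"
  then obtain j where e: "Suc k < j" "{k, j} \<in> pyr_edges n A" by blast
  then obtain up where c: "consecutive (pyr_side n A up) k j"
    using mem_pyr_edgesD[of k j n A] by auto
  with e have "k \<in> pyr_side n A up" "Suc k \<notin> pyr_side n A up"
    using consecutive_not_between[OF c, of "Suc k"] unfolding consecutive_def by auto
  with k show "k \<in> A \<longleftrightarrow> Suc k \<notin> A"
    by (simp add: mem_pyr_side_iff)
qed

lemma eq_of_pyr_edges_subset_union:
  assumes Y: "Y \<subseteq> {2..n-1}" "2 \<in> Y" and Z: "Z \<subseteq> {2..n-1}" "2 \<in> Z"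
    and sub: "pyr_edges n Z \<subseteq> pyr_edges n X \<union> pyr_edges n Y"
    and long: "\<And>a b. a + 2 \<le> b \<Longrightarrow> {a, b} \<in> pyr_edges n Z \<Longrightarrow> {a, b} \<in> pyr_edges n X \<Longrightarrow>
      a = 1 \<and> b = 3"
  shows "Z = Y"
proof (rule eq_of_same_switches[OF Z(1) Y(1) Z(2) Y(2)])
  fix k assume k: "2 \<le> k" "Suc k \<le> n - 1"
  have in_Y: "{a, b} \<in> pyr_edges n Y"
    if "{a, b} \<in> pyr_edges n Z" "a + 2 \<le> b" "3 < b" for a b
    using that sub long by fastforce
  show "(k \<in> Z \<longleftrightarrow> Suc k \<in> Z) \<longleftrightarrow> (k \<in> Y \<longleftrightarrow> Suc k \<in> Y)"
  proof (cases "k \<in> Z \<longleftrightarrow> Suc k \<in> Z")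
    case True
    then obtain i j where "i < k" "Suc k < j" "{i, j} \<in> pyr_edges n Z"
      using same_side_iff_edge_over[OF Z(1) k] by blast
    with k have "i < k" "Suc k < j" "{i, j} \<in> pyr_edges n Y"
      using in_Y by simp_all
    with True show ?thesis
      using same_side_iff_edge_over[OF Y(1) k] by blast
  next
    case False
    then obtain j where "Suc k < j" "{k, j} \<in> pyr_edges n Z"
      using switch_iff_edge_from[OF Z(1) k] by blast
    with k have "Suc k < j" "{k, j} \<in> pyr_edges n Y"
      using in_Y by simp_all
    with False show ?thesis
      using switch_iff_edge_from[OF Y(1) k] by blast
  qed
qed

lemma long_edge_pyr_edges_allD:
  assumes n: "n \<ge> 2" and e: "{a, b} \<in> pyr_edges n {2..n-1}" and ab: "a + 2 \<le> b"
  shows "a = 1 \<and> b = n"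
proof -
  obtain up where c: "consecutive (pyr_side n {2..n-1} up) a b"
    using mem_pyr_edgesD[OF e] ab by force
  show ?thesis
  proof (cases up)
    case True
    with n have "pyr_side n {2..n-1} up = {1..n}"
      unfolding pyr_side_def by auto
    with c ab have False
      using consecutive_not_between[OF c, of "Suc a"] unfolding consecutive_def by auto
    then show ?thesis ..
  next
    case False
    then have "pyr_side n {2..n-1} up = {1, n}"
      unfolding pyr_side_def by auto
    with c n show ?thesis
      unfolding consecutive_def by auto
  qed
qed

lemma edge_1_n_mem_pyr_edgesD:
  assumes n: "n \<ge> 3" and Z: "Z \<subseteq> {2..n-1}" "2 \<in> Z" and e: "{1, n} \<in> pyr_edges n Z"
  shows "Z = {2..n-1}"
proof -
  obtain up where c: "consecutive (pyr_side n Z up) 1 n"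
    using mem_pyr_edgesD[OF e] n by force
  have out: "x \<notin> pyr_side n Z up" if "x \<in> {2..n-1}" for x
  proof -
    from that n have "1 < x" "x < n" by auto
    then show ?thesis using consecutive_not_between[OF c] by blast
  qed
  with n Z(2) have "\<not> up"
    using mem_pyr_side_iff[of 2 n Z up] by auto
  with out have "{2..n-1} \<subseteq> Z"
    using mem_pyr_side_iff by blast
  with Z(1) show ?thesis by blast
qed

lemma long_edge_pyr_edges_twoD:
  assumes n: "n \<ge> 4" and e: "{a, b} \<in> pyr_edges n {2}" and ab: "a + 2 \<le> b"
  shows "(a = 2 \<and> b = n) \<or> (a = 1 \<and> b = 3)"
proof -
  obtain up where c: "consecutive (pyr_side n {2} up) a b"
    using mem_pyr_edgesD[OF e] ab by force
  show ?thesis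
  proof (cases up)
    case True
    then have "consecutive {1, 2, n} a b"
      using c unfolding pyr_side_def by (simp add: insert_commute)
    with ab n show ?thesis
      unfolding consecutive_def by auto
  next
    case False
    have side: "x \<in> pyr_side n {2} up \<longleftrightarrow> x \<noteq> 2" if "x \<in> {2..n-1}" for x
      using mem_pyr_side_iff[OF that] False by auto
    have "pyr_side n {2} up \<subseteq> {1..n}"
      using n by (intro pyr_side_subset) auto
    with c have "b \<le> n" "1 \<le> a"
      unfolding consecutive_def by auto
    with ab have "Suc a \<in> {2..n-1}" by auto
    moreover have "Suc a \<notin> pyr_side n {2} up"
      using consecutive_not_between[OF c, of "Suc a"] ab by auto
    ultimately have a: "a = 1"
      using side by auto
    have "b = 3"
    proof (rule ccontr)
      assume "b \<noteq> 3"
      with a ab \<open>b \<le> n\<close> have "3 \<in> {2..n-1}" "3 < b" by auto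
      then show False
        using consecutive_not_between[OF c, of 3] side a by auto
    qed
    with a show ?thesis by simp
  qed
qed

lemma edge_2_n_mem_pyr_edgesD:
  assumes n: "n \<ge> 3" and Z: "Z \<subseteq> {2..n-1}" "2 \<in> Z" and e: "{2, n} \<in> pyr_edges n Z"
  shows "Z = {2}"
proof -
  obtain up where c: "consecutive (pyr_side n Z up) 2 n"
    using mem_pyr_edgesD[OF e] n by force
  have "(2::nat) \<in> {2..n-1}" using n by simp
  with c Z(2) have up
    using mem_pyr_side_iff unfolding consecutive_def by blast
  have "x = 2" if "x \<in> Z" for x
  proof (rule ccontr)
    assume "x \<noteq> 2"
    moreover have "x \<in> {2..n-1}" using that Z(1) by blast
    ultimately have "2 < x" "x < n" "x \<in> {2..n-1}" using n by auto
    with that \<open>up\<close> show False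
      using consecutive_not_between[OF c] mem_pyr_side_iff by blast
  qed
  with Z(2) show ?thesis by blast
qed

lemma pyr_edges_subset_union_cases:
  assumes n: "n \<ge> 4" and X: "X = {2..n-1} \<or> X = {2}"
    and Y: "Y \<subseteq> {2..n-1}" "2 \<in> Y" and Z: "Z \<subseteq> {2..n-1}" "2 \<in> Z"
    and sub: "pyr_edges n Z \<subseteq> pyr_edges n X \<union> pyr_edges n Y"
  shows "Z = X \<or> Z = Y"
proof (cases "Z = X")
  case False
  have "a = 1 \<and> b = 3"
    if ab: "a + 2 \<le> b" and eZ: "{a, b} \<in> pyr_edges n Z" and eX: "{a, b} \<in> pyr_edges n X" for a b
    using X
  proof
    assume X: "X = {2..n-1}"
    with n eX ab have "a = 1 \<and> b = n"
      using long_edge_pyr_edges_allD[of n a b] by simp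
    with n Z eZ have "Z = X"
      using edge_1_n_mem_pyr_edgesD X by simp
    with False show ?thesis ..
  next
    assume X: "X = {2}"
    with n eX ab have "(a = 2 \<and> b = n) \<or> (a = 1 \<and> b = 3)"
      using long_edge_pyr_edges_twoD[of n a b] by simp
    moreover have "\<not> (a = 2 \<and> b = n)"
      using edge_2_n_mem_pyr_edgesD[OF _ Z] n eZ X False by auto
    ultimately show ?thesis by blast
  qed
  then show ?thesis
    using eq_of_pyr_edges_subset_union[OF Y Z sub] by blast
qed simp

lemma PT_pyr_seq_two_increasing:
  assumes n: "n \<ge> 3" and T: "T \<in> PT n"
  obtains inc dec where "pyr_seq n inc dec" "2 \<in> set inc" "tour_edges (1 # inc @ n # dec) = T"
proof -
  obtain inc dec where ps: "pyr_seq n inc dec" and T: "T = tour_edges (1 # inc @ n # dec)"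
    using T unfolding PT_def by blast
  show thesis
  proof (cases "2 \<in> set inc")
    case True
    with ps T show thesis by (intro that) simp_all
  next
    case False
    have ps': "pyr_seq n (rev dec) (rev inc)"
      using ps unfolding pyr_seq_def by (auto simp: sorted_wrt_rev)
    have "tour_edges (1 # rev dec @ n # rev inc) = pyr_edges n ({2..n-1} - set inc)"
      using tour_edges_pyr_seq[OF ps'] pyr_seqD[OF ps] n by simp
    also have "\<dots> = T"
      using pyr_edges_complement[OF pyr_seqD(1)[OF ps]] tour_edges_pyr_seq[OF ps] n T by simp
    finally show thesis
      using that[OF ps'] False pyr_seqD[OF ps] n by simp
  qed
qed

lemma PT_eq_pyr_edges:
  assumes n: "n \<ge> 3" and T: "T \<in> PT n"
  obtains A where "A \<subseteq> {2..n-1}" "2 \<in> A" "T = pyr_edges n A"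
proof -
  obtain inc dec where ps: "pyr_seq n inc dec" "2 \<in> set inc" "tour_edges (1 # inc @ n # dec) = T"
    using PT_pyr_seq_two_increasing[OF n T] .
  with n have "T = pyr_edges n (set inc)"
    using tour_edges_pyr_seq by simp
  with ps show thesis
    using that pyr_seqD(1) by blast
qed

lemma PT_subset_Pow_Kn_edges:
  assumes n: "n \<ge> 3"
  shows "PT n \<subseteq> Pow (Kn_edges n)"
proof
  fix T assume "T \<in> PT n"
  then obtain A where "A \<subseteq> {2..n-1}" "T = pyr_edges n A"
    using PT_eq_pyr_edges[OF n] by blast
  with n show "T \<in> Pow (Kn_edges n)"
    using pyr_edges_subset_Kn_edges by simp
qed

lemma pyr_code_eq_one_iff:
  assumes n: "n \<ge> 3" and T: "T \<in> PT n" and A: "A \<subseteq> {2..n-1}" "2 \<in> A" "T = pyr_edges n A"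
  shows "pyr_code n T i = 1 \<longleftrightarrow> i \<in> A"
proof -
  have set_inc: "set inc = A"
    if "pyr_seq n inc dec" "2 \<in> set inc" "tour_edges (1 # inc @ n # dec) = T" for inc dec
    using pyr_edges_inj[OF pyr_seqD(1)[OF that(1)] A(1) that(2) A(2)] tour_edges_pyr_seq[OF that(1)]
      that(3) A(3) n by simp
  obtain inc dec where ps: "pyr_seq n inc dec" "2 \<in> set inc" "tour_edges (1 # inc @ n # dec) = T"
    using PT_pyr_seq_two_increasing[OF n T] .
  have "pyr_code n T i = 1 \<longleftrightarrow> (\<exists>inc dec. pyr_seq n inc dec \<and> 2 \<in> set inc \<and>
      tour_edges (1 # inc @ n # dec) = T \<and> i \<in> set inc)"
    unfolding pyr_code_def by simp
  also have "\<dots> \<longleftrightarrow> i \<in> A"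
    using set_inc ps set_inc[OF ps] by blast
  finally show ?thesis .
qed

lemma PT_constant_code:
  assumes n: "n \<ge> 3" and T: "T \<in> PT n"
    and code: "(\<forall>i\<in>{3..n-1}. pyr_code n T i = 1) \<or> (\<forall>i\<in>{3..n-1}. pyr_code n T i = 0)"
  obtains X where "X = {2..n-1} \<or> X = {2}" "T = pyr_edges n X"
proof -
  obtain A where A: "A \<subseteq> {2..n-1}" "2 \<in> A" "T = pyr_edges n A"
    using PT_eq_pyr_edges[OF n T] .
  note code_iff = pyr_code_eq_one_iff[OF n T A]
  have "A = {2..n-1} \<or> A = {2}"
    using code
  proof
    assume "\<forall>i\<in>{3..n-1}. pyr_code n T i = 1"
    with code_iff have "{3..n-1} \<subseteq> A" by blast
    have "{2..n-1} \<subseteq> A"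
    proof
      fix x assume "x \<in> {2..n-1}"
      with \<open>{3..n-1} \<subseteq> A\<close> A(2) show "x \<in> A" by (cases "x = 2") auto
    qed
    with A(1) show ?thesis by blast
  next
    assume zero: "\<forall>i\<in>{3..n-1}. pyr_code n T i = 0"
    have "i \<notin> A" if "i \<in> {3..n-1}" for i
      using zero that code_iff[of i] by simp
    with A(1,2) show ?thesis by fastforce
  qed
  from that[OF this A(3)] show thesis .
qed

lemma PT_subset_union_cases:
  assumes n: "n \<ge> 4" and T: "T \<in> PT n"
    and code: "(\<forall>i\<in>{3..n-1}. pyr_code n T i = 1) \<or> (\<forall>i\<in>{3..n-1}. pyr_code n T i = 0)"
    and YZ: "Y \<in> PT n" "Z \<in> PT n" "Z \<subseteq> T \<union> Y"
  shows "Z = T \<or> Z = Y"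
proof -
  from n have n3: "n \<ge> 3" by simp
  obtain X where X: "X = {2..n-1} \<or> X = {2}" "T = pyr_edges n X"
    using PT_constant_code[OF n3 T code] .
  obtain B where B: "B \<subseteq> {2..n-1}" "2 \<in> B" "Y = pyr_edges n B"
    using PT_eq_pyr_edges[OF n3 YZ(1)] .
  obtain C where C: "C \<subseteq> {2..n-1}" "2 \<in> C" "Z = pyr_edges n C"
    using PT_eq_pyr_edges[OF n3 YZ(2)] .
  have "C = X \<or> C = B"
    using pyr_edges_subset_union_cases[OF n X(1) B(1,2) C(1,2)] YZ(3) X(2) B(3) C(3) by simp
  with X(2) B(3) C(3) show ?thesis by blast
qed

section \<open>Edges of the polytope\<close>

lemma sum_charvec_eq_card: "finite D \<Longrightarrow> (\<Sum>e\<in>D. charvec Z e) = real (card (D \<inter> Z))"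
  by (simp add: charvec_def sum.If_cases)

lemma finite_Kn_edges: "finite (Kn_edges n)"
  by (rule finite_subset[of _ "Pow {1..n}"]) (auto simp: Kn_edges_def)

lemma closed_segment_charvec_face_of:
  assumes U: "finite U" "F \<subseteq> Pow U" and XY: "X \<in> F" "Y \<in> F"
    and only: "\<And>Z. Z \<in> F \<Longrightarrow> Z \<subseteq> X \<union> Y \<Longrightarrow> Z = X \<or> Z = Y"
  shows "closed_segment (charvec X) (charvec Y) face_of convex hull (charvec ` F)"
proof -
  define D where "D = U - (X \<union> Y)"
  define f where "f p = (\<Sum>e\<in>D. p e)" for p :: "nat set \<Rightarrow> real"
  have lin: "linear f"
    by (rule linearI) (simp_all add: f_def scaleR_fun_def sum.distrib sum_distrib_left)
  have f_charvec: "f (charvec Z) = real (card (D \<inter> Z))" for Z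
    using U by (simp add: f_def D_def sum_charvec_eq_card)
  have "affine hull {charvec X, charvec Y} \<subseteq> f -` {0}"
  proof (rule hull_minimal)
    have "D \<inter> X = {}" "D \<inter> Y = {}" by (auto simp: D_def)
    then show "{charvec X, charvec Y} \<subseteq> f -` {0}"
      by (simp add: f_charvec)
    show "affine (f -` {0})"
      using lin by (intro subspace_imp_affine linear_subspace_vimage) auto
  qed
  moreover have "convex hull (charvec ` F - {charvec X, charvec Y}) \<subseteq> f -` {1..}"
  proof (rule hull_minimal)
    show "charvec ` F - {charvec X, charvec Y} \<subseteq> f -` {1..}"
    proof
      fix z assume "z \<in> charvec ` F - {charvec X, charvec Y}"
      then obtain Z where Z: "Z \<in> F" "z = charvec Z" "Z \<noteq> X" "Z \<noteq> Y" by blast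
      then obtain e where "e \<in> D \<inter> Z" using only U unfolding D_def by blast
      then have "card (D \<inter> Z) \<noteq> 0" using U by (auto simp: D_def)
      then show "z \<in> f -` {1..}" using Z by (simp add: f_charvec)
    qed
    show "convex (f -` {1..})" using lin by (rule convex_linear_vimage) simp
  qed
  ultimately have "affine hull {charvec X, charvec Y} \<inter> convex hull (charvec ` F - {charvec X, charvec Y}) = {}"
    by force
  then have "convex hull {charvec X, charvec Y} face_of convex hull (charvec ` F)"
    using U XY by (intro face_of_convex_hulls) (auto intro: finite_subset)
  then show ?thesis by (simp add: segment_convex_hull)
qed

theorem mainTheorem6:
  fixes n :: nat
  assumes "n \<ge> 4"
  shows "\<forall>T\<in>PT n. ((\<forall>i\<in>{3..n-1}. pyr_code n T i = 1) \<or> (\<forall>i\<in>{3..n-1}. pyr_code n T i = 0)) \<longrightarrow>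
           (\<forall>v. v extreme_point_of PYR n \<and> v \<noteq> charvec T \<longrightarrow> adjacent_in (PYR n) (charvec T) v)"
proof (intro ballI impI allI)
  fix T v
  assume T: "T \<in> PT n"
    and code: "(\<forall>i\<in>{3..n-1}. pyr_code n T i = 1) \<or> (\<forall>i\<in>{3..n-1}. pyr_code n T i = 0)"
    and v: "v extreme_point_of PYR n \<and> v \<noteq> charvec T"
  then have "v \<in> charvec ` PT n"
    using extreme_point_of_convex_hull unfolding PYR_def by blast
  then obtain Y where Y: "Y \<in> PT n" "v = charvec Y" by blast
  from assms have "PT n \<subseteq> Pow (Kn_edges n)"
    by (intro PT_subset_Pow_Kn_edges) simp
  then have "closed_segment (charvec T) (charvec Y) face_of PYR n"
    unfolding PYR_def using finite_Kn_edges T Y(1) PT_subset_union_cases[OF assms T code Y(1)]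
    by (intro closed_segment_charvec_face_of) auto
  with v Y(2) show "adjacent_in (PYR n) (charvec T) v"
    unfolding adjacent_in_def by auto
qed

end
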